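(* Greedy charger placement is not optimal in general. Consider the directed graph with vertices $O, c_0, c_1, c_2, c_3, c_4, c_5, D$ and links (with delay functions of the link's own flow $x$): $O\to c_0$: $10$; $c_0\to D$: $10$; $O\to c_4$: $x$; $c_4\to c_3$: $0$; $c_3\to D$: $1.1$; $c_4\to c_2$: $0$; $c_2\to c_5$: $0$; $c_5\to D$: $x$; $O\to c_1$: $0$; $c_1\to c_5$: $1.1$. There is a single OD pair $(O,D)$ with demand $1$, all of type $F_2$ (must charge exactly once), and charging self-loops have zero delay. A charger always exists at $c_0$; one must choose a set $S\subseteq\{c_1,c_2,c_3\}$ with $|S|=2$ of additional charger locations, the objective being the total delay $c_d=\sum_l x_l d_l(x_l)$ at Nash equilibrium of the network with chargers at $\{c_0\}\cup S$. Then: (i) with a single added charger, the equilibrium total delay is $2.1$ for $S=\{c_1\}$, $2$ for $S=\{c_2\}$, and $2.1$ for $S=\{c_3\}$; (ii) for $S=\{c_1,c_2\}$ and $S=\{c_2,c_3\}$ the equilibrium total delay is $2$; (iii) for $S=\{c_1,c_3\}$ the equilibrium total delay is $1.6$. Consequently the greedy algorithm (which adds one location at a time, each time the one minimizing the equilibrium total delay) selects $c_2$ first and ends with total delay $2$, whereas the optimal choice $\{c_1,c_3\}$ achieves $1.6$.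
   Context: Model: non-atomic congestion game on a directed graph; a charger at vertex $v$ is a self-loop $(v,v)$; an $F_2$ agent's feasible routes are directed paths (distinct vertices) from $O$ to $D$ containing exactly one charging self-loop at a vertex of the path where a charger is placed. Route cost is the sum of link delays evaluated at the link flows. A Nash (Wardrop) equilibrium is a feasible route-flow assignment in which every route carrying positive flow has minimal cost among feasible routes. Total delay is $c_d=\sum_{l} x_l\,d_l(x_l)$ summed over all links (including charger self-loops, which here contribute zero). *)

theory Defs
  imports Main "HOL.Real"
begin

datatype node = VO | C0 | C1 | C2 | C3 | C4 | C5 | VD

definition E :: "(node \<times> node) set" where
  "E = {(VO,C0),(C0,VD),(VO,C4),(C4,C3),(C3,VD),(C4,C2),(C2,C5),(C5,VD),(VO,C1),(C1,C5)}"

text \<open>Delay functions of the link's own flow; charging self-loops (and non-links) have zero delay.\<close>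
fun delay :: "node \<times> node \<Rightarrow> real \<Rightarrow> real" where
  "delay (VO,C0) x = 10"
| "delay (C0,VD) x = 10"
| "delay (VO,C4) x = x"
| "delay (C4,C3) x = 0"
| "delay (C3,VD) x = 1.1"
| "delay (C4,C2) x = 0"
| "delay (C2,C5) x = 0"
| "delay (C5,VD) x = x"
| "delay (VO,C1) x = 0"
| "delay (C1,C5) x = 1.1"
| "delay _ x = 0"

definition path_links :: "node list \<Rightarrow> (node \<times> node) set" where
  "path_links p = set (zip p (tl p))"

definition is_od_path :: "node list \<Rightarrow> bool" where
  "is_od_path p \<longleftrightarrow> p \<noteq> [] \<and> hd p = VO \<and> last p = VD \<and> distinct p \<and> path_links p \<subseteq> E"

text \<open>Feasible F2 routes given the charger set S: a path plus exactly one charging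
  self-loop at a vertex of the path carrying a charger.\<close>
definition feasible_routes :: "node set \<Rightarrow> (node list \<times> node) set" where
  "feasible_routes S = {(p, c). is_od_path p \<and> c \<in> set p \<and> c \<in> S}"

definition route_links :: "node list \<times> node \<Rightarrow> (node \<times> node) set" where
  "route_links r = path_links (fst r) \<union> {(snd r, snd r)}"

definition link_flow :: "node set \<Rightarrow> (node list \<times> node \<Rightarrow> real) \<Rightarrow> node \<times> node \<Rightarrow> real" where
  "link_flow S f l = (\<Sum>r\<in>feasible_routes S. if l \<in> route_links r then f r else 0)"

definition route_cost :: "node set \<Rightarrow> (node list \<times> node \<Rightarrow> real) \<Rightarrow> node list \<times> node \<Rightarrow> real" where
  "route_cost S f r = (\<Sum>l\<in>route_links r. delay l (link_flow S f l))"

definition is_assignment :: "node set \<Rightarrow> (node list \<times> node \<Rightarrow> real) \<Rightarrow> bool" where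
  "is_assignment S f \<longleftrightarrow> (\<forall>r. 0 \<le> f r) \<and> (\<forall>r. r \<notin> feasible_routes S \<longrightarrow> f r = 0)
     \<and> (\<Sum>r\<in>feasible_routes S. f r) = 1"

definition is_equilibrium :: "node set \<Rightarrow> (node list \<times> node \<Rightarrow> real) \<Rightarrow> bool" where
  "is_equilibrium S f \<longleftrightarrow> is_assignment S f \<and>
     (\<forall>r\<in>feasible_routes S. 0 < f r \<longrightarrow> (\<forall>r'\<in>feasible_routes S. route_cost S f r \<le> route_cost S f r'))"

definition network_links :: "node set \<Rightarrow> (node \<times> node) set" where
  "network_links S = E \<union> {(v, v) | v. v \<in> S}"

definition total_delay :: "node set \<Rightarrow> (node list \<times> node \<Rightarrow> real) \<Rightarrow> real" where
  "total_delay S f = (\<Sum>l\<in>network_links S. link_flow S f l * delay l (link_flow S f l))"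

definition eq_total_delay :: "node set \<Rightarrow> real \<Rightarrow> bool" where
  "eq_total_delay A v \<longleftrightarrow> (\<exists>f. is_equilibrium (insert C0 A) f) \<and>
     (\<forall>f. is_equilibrium (insert C0 A) f \<longrightarrow> total_delay (insert C0 A) f = v)"

end

theory Submission
  imports Defs
begin

text \<open>Every O-D path passes at most one of the candidate vertices C0, C1, C2, C3, so once chargers
  are placed at C0 and some of C1, C2, C3, a feasible route is determined by its charging vertex and
  the equilibrium problem reduces to four route flows with affine route costs. The remaining Wardrop conditions
  are linear: a single available route takes the whole demand; C2 beats C1 or C3, whose route is
  costlier by 1.1 minus the flow through C2; and C1 and C3 split the demand evenly.\<close>

fun paths_to_VD :: "node \<Rightarrow> node list set" where
  "paths_to_VD VD = {[VD]}"
| "paths_to_VD C0 = {[C0,VD]}"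
| "paths_to_VD C3 = {[C3,VD]}"
| "paths_to_VD C5 = {[C5,VD]}"
| "paths_to_VD C1 = {[C1,C5,VD]}"
| "paths_to_VD C2 = {[C2,C5,VD]}"
| "paths_to_VD C4 = {[C4,C3,VD], [C4,C2,C5,VD]}"
| "paths_to_VD VO = {[VO,C0,VD], [VO,C4,C3,VD], [VO,C4,C2,C5,VD], [VO,C1,C5,VD]}"

lemma path_links_Cons_Cons: "path_links (v # w # q) = insert (v, w) (path_links (w # q))"
  by (simp add: path_links_def)

lemma in_paths_to_VD:
  assumes "q \<noteq> []" "last q = VD" "path_links q \<subseteq> E"
  shows "q \<in> paths_to_VD (hd q)"
  using assms
proof (induction q)
  case Nil
  then show ?case by simp
next
  case (Cons v q')
  show ?case
  proof (cases q')
    case Nil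
    then show ?thesis using Cons.prems by simp
  next
    case (Cons w q'')
    with Cons.prems Cons.IH have "(v, w) \<in> E" "q' \<in> paths_to_VD w"
      by (auto simp: path_links_Cons_Cons)
    then show ?thesis using Cons by (auto simp: E_def)
  qed
qed

lemma is_od_path_iff: "is_od_path p \<longleftrightarrow> p \<in> paths_to_VD VO"
proof
  assume "is_od_path p"
  then show "p \<in> paths_to_VD VO"
    using in_paths_to_VD[of p] by (auto simp: is_od_path_def)
next
  assume "p \<in> paths_to_VD VO"
  then show "is_od_path p"
    by (auto elim!: insertE simp only: paths_to_VD.simps)
      (simp_all add: is_od_path_def path_links_def E_def)
qed

text \<open>The last equation is junk: those routes are never feasible.\<close>

fun charging_route :: "node \<Rightarrow> node list \<times> node" where
  "charging_route C0 = ([VO,C0,VD], C0)"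
| "charging_route C1 = ([VO,C1,C5,VD], C1)"
| "charging_route C2 = ([VO,C4,C2,C5,VD], C2)"
| "charging_route C3 = ([VO,C4,C3,VD], C3)"
| "charging_route c = ([], c)"

lemma snd_charging_route [simp]: "snd (charging_route c) = c"
  by (cases c) simp_all

lemma inj_charging_route: "inj charging_route"
  by (metis injI snd_charging_route)

lemma feasible_routes_eq:
  assumes "A \<subseteq> {C1, C2, C3}"
  shows "feasible_routes (insert C0 A) = charging_route ` insert C0 A"
proof (intro equalityI subsetI)
  fix r assume "r \<in> feasible_routes (insert C0 A)"
  then obtain p c where "r = (p, c)" "p \<in> paths_to_VD VO" "c \<in> set p" "c \<in> insert C0 A"
    unfolding feasible_routes_def is_od_path_iff by blast
  with assms have "r = charging_route c" "c \<in> insert C0 A"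
    by auto
  then show "r \<in> charging_route ` insert C0 A" by blast
next
  fix r assume "r \<in> charging_route ` insert C0 A"
  with assms show "r \<in> feasible_routes (insert C0 A)"
    unfolding feasible_routes_def is_od_path_iff by auto
qed

lemma charging_route_feasible_iff:
  assumes "A \<subseteq> {C1, C2, C3}"
  shows "charging_route c \<in> feasible_routes (insert C0 A) \<longleftrightarrow> c \<in> insert C0 A"
  by (simp only: feasible_routes_eq[OF assms] inj_image_mem_iff[OF inj_charging_route])

lemma sum_feasible_routes:
  assumes "A \<subseteq> {C1, C2, C3}"
  shows "(\<Sum>r\<in>feasible_routes (insert C0 A). h r) = (\<Sum>c\<in>insert C0 A. h (charging_route c))"
  unfolding feasible_routes_eq[OF assms]
  by (subst sum.reindex[OF inj_on_subset[OF inj_charging_route subset_UNIV]]) simp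

text \<open>Link (VO, C4) carries g C2 + g C3 and link (C5, VD) carries g C1 + g C2; all other links
  have constant delay.\<close>

fun charger_route_cost :: "(node \<Rightarrow> real) \<Rightarrow> node \<Rightarrow> real" where
  "charger_route_cost g C0 = 20"
| "charger_route_cost g C1 = 1.1 + (g C1 + g C2)"
| "charger_route_cost g C2 = (g C2 + g C3) + (g C1 + g C2)"
| "charger_route_cost g C3 = (g C2 + g C3) + 1.1"
| "charger_route_cost g _ = 0"

definition charger_total_delay :: "(node \<Rightarrow> real) \<Rightarrow> real" where
  "charger_total_delay g = 20 * g C0 + (g C2 + g C3)\<^sup>2 + 1.1 * g C3 + (g C1 + g C2)\<^sup>2 + 1.1 * g C1"

lemma link_flow_eq:
  assumes "A \<subseteq> {C1, C2, C3}"
    and "\<forall>r. r \<notin> feasible_routes (insert C0 A) \<longrightarrow> f r = 0"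
  shows "link_flow (insert C0 A) f l =
    (\<Sum>c\<in>{C0, C1, C2, C3}. if l \<in> route_links (charging_route c) then f (charging_route c) else 0)"
proof -
  have off_charger: "f (charging_route c) = 0" if "c \<notin> insert C0 A" for c
    using assms that charging_route_feasible_iff by blast
  have "link_flow (insert C0 A) f l =
      (\<Sum>c\<in>insert C0 A. if l \<in> route_links (charging_route c) then f (charging_route c) else 0)"
    unfolding link_flow_def by (rule sum_feasible_routes[OF assms(1)])
  also have "\<dots> = (\<Sum>c\<in>{C0, C1, C2, C3}. if l \<in> route_links (charging_route c) then f (charging_route c) else 0)"
  proof (rule sum.mono_neutral_left)
    show "\<forall>c\<in>{C0, C1, C2, C3} - insert C0 A.
        (if l \<in> route_links (charging_route c) then f (charging_route c) else 0) = 0"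
      using off_charger by (auto simp del: charging_route.simps)
  qed (use assms(1) in auto)
  finally show ?thesis .
qed

lemma route_cost_charging_route:
  assumes "A \<subseteq> {C1, C2, C3}"
    and "\<forall>r. r \<notin> feasible_routes (insert C0 A) \<longrightarrow> f r = 0"
    and "c \<in> {C0, C1, C2, C3}"
  shows "route_cost (insert C0 A) f (charging_route c) = charger_route_cost (f \<circ> charging_route) c"
  using assms(3) unfolding route_cost_def link_flow_eq[OF assms(1,2)]
  by (elim insertE emptyE) (simp_all add: route_links_def path_links_def)

lemma delay_self_loop [simp]: "delay (v, v) x = 0"
  by (cases v) simp_all

lemma self_loop_notin_E: "(v, v) \<notin> E"
  by (cases v) (simp_all add: E_def)

lemma total_delay_eq_sum_links:
  assumes "finite S"
  shows "total_delay S f = (\<Sum>l\<in>E. link_flow S f l * delay l (link_flow S f l))"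
proof -
  have "network_links S = E \<union> (\<lambda>v. (v, v)) ` S"
    by (auto simp: network_links_def)
  moreover have "E \<inter> (\<lambda>v. (v, v)) ` S = {}"
    using self_loop_notin_E by blast
  moreover have "finite E"
    by (simp add: E_def)
  ultimately show ?thesis
    unfolding total_delay_def using assms by (simp add: sum.union_disjoint sum.neutral)
qed

lemma total_delay_eq:
  assumes "A \<subseteq> {C1, C2, C3}"
    and "\<forall>r. r \<notin> feasible_routes (insert C0 A) \<longrightarrow> f r = 0"
  shows "total_delay (insert C0 A) f = charger_total_delay (f \<circ> charging_route)"
proof -
  have "finite (insert C0 A)"
    using assms(1) finite_subset by auto
  show ?thesis
    unfolding total_delay_eq_sum_links[OF \<open>finite (insert C0 A)\<close>] link_flow_eq[OF assms] E_def
    by (simp add: route_links_def path_links_def charger_total_delay_def power2_eq_square)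
qed

definition is_charger_equilibrium :: "node set \<Rightarrow> (node \<Rightarrow> real) \<Rightarrow> bool" where
  "is_charger_equilibrium S g \<longleftrightarrow> (\<forall>c. 0 \<le> g c) \<and> (\<forall>c. c \<notin> S \<longrightarrow> g c = 0) \<and> sum g S = 1 \<and>
     (\<forall>c\<in>S. 0 < g c \<longrightarrow> (\<forall>c'\<in>S. charger_route_cost g c \<le> charger_route_cost g c'))"

lemma is_equilibrium_iff:
  assumes A: "A \<subseteq> {C1, C2, C3}"
  shows "is_equilibrium (insert C0 A) f \<longleftrightarrow>
    (\<forall>r. r \<notin> feasible_routes (insert C0 A) \<longrightarrow> f r = 0) \<and>
    is_charger_equilibrium (insert C0 A) (f \<circ> charging_route)"
proof (cases "\<forall>r. r \<notin> feasible_routes (insert C0 A) \<longrightarrow> f r = 0")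
  case False
  then show ?thesis unfolding is_equilibrium_def is_assignment_def by blast
next
  case vanishing: True
  let ?S = "insert C0 A" and ?g = "f \<circ> charging_route"
  have routes: "feasible_routes ?S = charging_route ` ?S"
    using feasible_routes_eq[OF A] .
  have "(\<forall>r. 0 \<le> f r) \<longleftrightarrow> (\<forall>c. 0 \<le> ?g c)"
    using vanishing routes by (metis comp_apply imageE order_refl)
  moreover have "\<forall>c. c \<notin> ?S \<longrightarrow> ?g c = 0"
    using vanishing charging_route_feasible_iff[OF A] by (metis comp_apply)
  moreover have "(\<Sum>r\<in>feasible_routes ?S. f r) = sum ?g ?S"
    using sum_feasible_routes[OF A] by simp
  moreover have "route_cost ?S f (charging_route c) = charger_route_cost ?g c" if "c \<in> ?S" for c
    using route_cost_charging_route[OF A vanishing] that A by auto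
  ultimately show ?thesis
    using vanishing unfolding is_equilibrium_def is_assignment_def is_charger_equilibrium_def routes
    by (auto simp del: charging_route.simps)
qed

lemma eq_total_delayI:
  assumes A: "A \<subseteq> {C1, C2, C3}"
    and "is_charger_equilibrium (insert C0 A) g"
    and "\<And>g. is_charger_equilibrium (insert C0 A) g \<Longrightarrow> charger_total_delay g = v"
  shows "eq_total_delay A v"
  unfolding eq_total_delay_def
proof (intro conjI allI impI)
  let ?S = "insert C0 A"
  define f where "f r = (if r \<in> feasible_routes ?S then g (snd r) else 0)" for r
  have "f \<circ> charging_route = g"
  proof
    fix c
    show "(f \<circ> charging_route) c = g c"
      using assms(2) by (simp add: f_def charging_route_feasible_iff[OF A] is_charger_equilibrium_def)
  qed
  moreover have "\<forall>r. r \<notin> feasible_routes ?S \<longrightarrow> f r = 0"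
    by (simp add: f_def)
  ultimately show "\<exists>f. is_equilibrium ?S f"
    using assms(2) is_equilibrium_iff[OF A] by metis
next
  fix f
  assume "is_equilibrium (insert C0 A) f"
  then show "total_delay (insert C0 A) f = v"
    using assms(3) by (simp add: is_equilibrium_iff[OF A] total_delay_eq[OF A])
qed

lemma
  assumes "is_charger_equilibrium S g"
  shows charger_equilibrium_nonneg: "0 \<le> g c"
    and charger_equilibrium_off: "c \<notin> S \<Longrightarrow> g c = 0"
    and charger_equilibrium_wardrop:
      "c \<in> S \<Longrightarrow> c' \<in> S \<Longrightarrow> 0 < g c \<Longrightarrow> charger_route_cost g c \<le> charger_route_cost g c'"
  using assms unfolding is_charger_equilibrium_def by blast+

lemma charger_equilibrium_flow_sum:
  assumes "is_charger_equilibrium S g" "S \<subseteq> {C0, C1, C2, C3}"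
  shows "g C0 + g C1 + g C2 + g C3 = 1"
proof -
  have "sum g {C0, C1, C2, C3} = sum g S"
    using assms by (intro sum.mono_neutral_right) (auto simp: is_charger_equilibrium_def)
  then show ?thesis
    using assms(1) by (simp add: is_charger_equilibrium_def)
qed

lemma charger_equilibrium_avoids_C0:
  assumes eq: "is_charger_equilibrium (insert C0 A) g" and A: "A \<subseteq> {C1, C2, C3}" "A \<noteq> {}"
  shows "g C0 = 0"
proof (rule ccontr)
  assume "g C0 \<noteq> 0"
  then have "0 < g C0"
    using charger_equilibrium_nonneg[OF eq, of C0] by linarith
  moreover obtain c where "c \<in> A"
    using A by blast
  ultimately have "20 \<le> charger_route_cost g c"
    using charger_equilibrium_wardrop[OF eq, of C0 c] by simp
  moreover have "g C0 + g C1 + g C2 + g C3 = 1"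
    using charger_equilibrium_flow_sum[OF eq] A by auto
  moreover have "c \<in> {C1, C2, C3}"
    using \<open>c \<in> A\<close> A by blast
  ultimately show False
    using charger_equilibrium_nonneg[OF eq, of C0] charger_equilibrium_nonneg[OF eq, of C1]
      charger_equilibrium_nonneg[OF eq, of C2] charger_equilibrium_nonneg[OF eq, of C3]
    by auto
qed

lemma eq_total_delay_singleton:
  assumes c: "c \<in> {C1, C2, C3}"
  shows "eq_total_delay {c} (charger_total_delay (\<lambda>c'. if c' = c then 1 else 0))"
proof (rule eq_total_delayI)
  show "is_charger_equilibrium {C0, c} (\<lambda>c'. if c' = c then 1 else 0)"
    using c by (auto simp: is_charger_equilibrium_def)
next
  fix g
  assume eq: "is_charger_equilibrium {C0, c} g"
  have "g C0 = 0"
    using charger_equilibrium_avoids_C0[OF eq] c by simp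
  then have "g c' = 0" if "c' \<noteq> c" for c'
    using charger_equilibrium_off[OF eq] that by (cases "c' = C0") simp_all
  moreover have "g C0 + g C1 + g C2 + g C3 = 1"
    using charger_equilibrium_flow_sum[OF eq] c by auto
  ultimately have "g = (\<lambda>c'. if c' = c then 1 else 0)"
    using c by (auto simp: fun_eq_iff)
  then show "charger_total_delay g = charger_total_delay (\<lambda>c'. if c' = c then 1 else 0)"
    by simp
qed (use c in auto)

lemma eq_total_delay_pair_C2:
  assumes c: "c \<in> {C1, C3}"
  shows "eq_total_delay {c, C2} 2"
proof (rule eq_total_delayI)
  show "is_charger_equilibrium {C0, c, C2} (\<lambda>c'. if c' = C2 then 1 else 0)"
    using c by (auto simp: is_charger_equilibrium_def)
next
  fix g
  assume eq: "is_charger_equilibrium {C0, c, C2} g"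
  have "g C0 = 0"
    using charger_equilibrium_avoids_C0[OF eq] c by auto
  moreover have "g C1 + g C3 = g c"
    using charger_equilibrium_off[OF eq] c by auto
  moreover have "g C0 + g C1 + g C2 + g C3 = 1"
    using charger_equilibrium_flow_sum[OF eq] c by auto
  moreover have "g c = 0"
  proof (rule ccontr)
    assume "g c \<noteq> 0"
    then have "charger_route_cost g c \<le> charger_route_cost g C2"
      using charger_equilibrium_wardrop[OF eq, of c C2] charger_equilibrium_nonneg[OF eq, of c]
      by simp
    then show False
      using c \<open>g C0 = 0\<close> \<open>g C1 + g C3 = g c\<close> \<open>g C0 + g C1 + g C2 + g C3 = 1\<close>
        charger_equilibrium_nonneg[OF eq, of C1] charger_equilibrium_nonneg[OF eq, of C3]
      by auto
  qed
  ultimately have "g C2 = 1" "g C1 = 0" "g C3 = 0"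
    using charger_equilibrium_nonneg[OF eq, of C1] charger_equilibrium_nonneg[OF eq, of C3]
    by linarith+
  then show "charger_total_delay g = 2"
    by (simp add: charger_total_delay_def \<open>g C0 = 0\<close>)
qed (use c in auto)

lemma eq_total_delay_C1_C3: "eq_total_delay {C1, C3} 1.6"
proof (rule eq_total_delayI)
  show "is_charger_equilibrium {C0, C1, C3} (\<lambda>c. if c = C1 \<or> c = C3 then 1/2 else 0)"
    by (simp add: is_charger_equilibrium_def)
next
  fix g
  assume eq: "is_charger_equilibrium {C0, C1, C3} g"
  have "g C0 = 0"
    using charger_equilibrium_avoids_C0[OF eq] by simp
  moreover have "g C2 = 0"
    using charger_equilibrium_off[OF eq] by simp
  moreover have "g C0 + g C1 + g C2 + g C3 = 1"
    using charger_equilibrium_flow_sum[OF eq] by simp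
  moreover have "g C1 \<le> g C3" if "0 < g C1"
    using charger_equilibrium_wardrop[OF eq, of C1 C3] that \<open>g C2 = 0\<close> by simp
  moreover have "g C3 \<le> g C1" if "0 < g C3"
    using charger_equilibrium_wardrop[OF eq, of C3 C1] that \<open>g C2 = 0\<close> by simp
  ultimately have "g C1 = 1/2" "g C3 = 1/2"
    using charger_equilibrium_nonneg[OF eq, of C1] charger_equilibrium_nonneg[OF eq, of C3]
    by linarith+
  show "charger_total_delay g = 1.6"
    by (simp add: charger_total_delay_def \<open>g C0 = 0\<close> \<open>g C2 = 0\<close> \<open>g C1 = 1/2\<close> \<open>g C3 = 1/2\<close>
        power2_eq_square)
qed simp

theorem mainTheorem3:
  shows "eq_total_delay {C1} 2.1 \<and> eq_total_delay {C2} 2 \<and> eq_total_delay {C3} 2.1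
       \<and> eq_total_delay {C1, C2} 2 \<and> eq_total_delay {C2, C3} 2
       \<and> eq_total_delay {C1, C3} 1.6"
proof -
  have "eq_total_delay {C1} 2.1" "eq_total_delay {C2} 2" "eq_total_delay {C3} 2.1"
    using eq_total_delay_singleton[of C1] eq_total_delay_singleton[of C2]
      eq_total_delay_singleton[of C3]
    by (simp_all add: charger_total_delay_def)
  moreover have "eq_total_delay {C1, C2} 2" "eq_total_delay {C2, C3} 2"
    using eq_total_delay_pair_C2[of C1] eq_total_delay_pair_C2[of C3] by (simp_all add: insert_commute)
  ultimately show ?thesis
    using eq_total_delay_C1_C3 by blast
qed

end
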